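(* Let $n\ge 2$. If $M\in\mathcal{S}_n$ is a minimiser of $\lambda_{n-1}$ over $\mathcal{S}_n$, then the matrix obtained from $M$ by setting all of its diagonal entries to $0$ is also a minimiser of $\lambda_{n-1}$ over $\mathcal{S}_n$.
   Context: $\mathcal{S}_n$ is the set of $n\times n$ real symmetric matrices with all entries in $[0,1]$; $\lambda_k(M)$ is the $k$-th largest eigenvalue of $M$ counted with multiplicity. A minimiser of $\lambda_{n-1}$ over $\mathcal{S}_n$ is $M\in\mathcal{S}_n$ with $\lambda_{n-1}(M)\le\lambda_{n-1}(M')$ for all $M'\in\mathcal{S}_n$. *)

theory Defs
  imports "Jordan_Normal_Form.Char_Poly" "HOL-Library.Multiset"
begin

definition S_set :: "nat \<Rightarrow> real mat set" where
  "S_set n = {M. M \<in> carrier_mat n n \<and> transpose_mat M = M \<and>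
     (\<forall>i<n. \<forall>j<n. 0 \<le> M $$ (i,j) \<and> M $$ (i,j) \<le> 1)}"

text \<open>Eigenvalues (real roots of the characteristic polynomial, with multiplicity),
  in non-increasing order. For real symmetric matrices all eigenvalues are real,
  so this list has length n.\<close>
definition eigs_desc :: "real mat \<Rightarrow> real list" where
  "eigs_desc M = rev (sorted_list_of_multiset (proots (char_poly M)))"

definition lambda_k :: "nat \<Rightarrow> real mat \<Rightarrow> real" where
  "lambda_k k M = eigs_desc M ! (k - 1)"

definition is_minimiser :: "nat \<Rightarrow> real mat \<Rightarrow> bool" where
  "is_minimiser n M \<longleftrightarrow> M \<in> S_set n \<and>
     (\<forall>M' \<in> S_set n. lambda_k (n - 1) M \<le> lambda_k (n - 1) M')"

definition zero_diag :: "real mat \<Rightarrow> real mat" where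
  "zero_diag M = mat (dim_row M) (dim_col M) (\<lambda>(i,j). if i = j then 0 else M $$ (i,j))"

end

theory Submission
  imports Defs
begin

(* Let Z be M with its diagonal cleared. Since the diagonal of M is nonnegative,
   x^T M x = x^T Z x + sum_i M_ii x_i^2 >= x^T Z x for every x. By the min-max characterisation
   of the second smallest eigenvalue this gives lambda_(n-1)(Z) <= lambda_(n-1)(M), and Z is again
   symmetric with entries in [0,1], so it is a minimiser as well. The min-max step rests on the
   real spectral theorem (proved by Householder deflation), which identifies the roots of the
   characteristic polynomial with the diagonal of an orthogonal diagonalisation. *)

lemma Re_of_real_mat_mult_vec:
  assumes "A \<in> carrier_mat n m" and "z \<in> carrier_vec m"
  shows "map_vec Re (map_mat complex_of_real A *\<^sub>v z) = A *\<^sub>v map_vec Re z"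
  using assms by (intro eq_vecI) (auto simp: scalar_prod_def)

lemma Im_of_real_mat_mult_vec:
  assumes "A \<in> carrier_mat n m" and "z \<in> carrier_vec m"
  shows "map_vec Im (map_mat complex_of_real A *\<^sub>v z) = A *\<^sub>v map_vec Im z"
  using assms by (intro eq_vecI) (auto simp: scalar_prod_def)

lemma real_symmetric_has_eigenvector:
  fixes A :: "real mat"
  assumes A: "A \<in> carrier_mat n n" and sym: "transpose_mat A = A" and "n > 0"
  obtains e v where "v \<in> carrier_vec n" "v \<noteq> 0\<^sub>v n" "A *\<^sub>v v = e \<cdot>\<^sub>v v"
proof -
  let ?Ac = "map_mat complex_of_real A"
  have Ac: "?Ac \<in> carrier_mat n n" using A by auto
  have "\<not> constant (poly (char_poly ?Ac))"
    using degree_monic_char_poly[OF Ac] \<open>n > 0\<close> by (simp add: constant_degree)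
  then obtain l where "poly (char_poly ?Ac) l = 0" using fundamental_theorem_of_algebra by blast
  then obtain z where z: "z \<in> carrier_vec n" "z \<noteq> 0\<^sub>v n" "?Ac *\<^sub>v z = l \<cdot>\<^sub>v z"
    using eigenvalue_root_char_poly[OF Ac] Ac unfolding eigenvalue_def eigenvector_def by auto
  define x where "x = map_vec Re z"
  define y where "y = map_vec Im z"
  have x: "x \<in> carrier_vec n" and y: "y \<in> carrier_vec n" using z(1) by (auto simp: x_def y_def)
  have "A *\<^sub>v x = map_vec Re (l \<cdot>\<^sub>v z)"
    using Re_of_real_mat_mult_vec[OF A z(1)] z(3) by (simp add: x_def)
  also have "\<dots> = Re l \<cdot>\<^sub>v x - Im l \<cdot>\<^sub>v y"
    using z(1) by (intro eq_vecI) (auto simp: x_def y_def)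
  finally have Ax: "A *\<^sub>v x = Re l \<cdot>\<^sub>v x - Im l \<cdot>\<^sub>v y" .
  have "A *\<^sub>v y = map_vec Im (l \<cdot>\<^sub>v z)"
    using Im_of_real_mat_mult_vec[OF A z(1)] z(3) by (simp add: y_def)
  also have "\<dots> = Im l \<cdot>\<^sub>v x + Re l \<cdot>\<^sub>v y"
    using z(1) by (intro eq_vecI) (auto simp: x_def y_def)
  finally have Ay: "A *\<^sub>v y = Im l \<cdot>\<^sub>v x + Re l \<cdot>\<^sub>v y" .
  \<comment> \<open>Symmetry of A forces the eigenvalue l to be real.\<close>
  have "(A *\<^sub>v y) \<bullet> x = y \<bullet> (A *\<^sub>v x)"
    using transpose_vec_mult_scalar[OF A x y] sym by simp
  hence "Im l * (x \<bullet> x + y \<bullet> y) = 0"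
    unfolding Ax Ay using x y
    by (simp add: add_scalar_prod_distrib[of _ n] scalar_prod_minus_distrib[of _ n]
        comm_scalar_prod[of y n x] algebra_simps)
  moreover have "x \<noteq> 0\<^sub>v n \<or> y \<noteq> 0\<^sub>v n"
    using z(1,2) by (auto simp: x_def y_def vec_eq_iff complex_eq_iff)
  hence "x \<bullet> x + y \<bullet> y > 0"
    using conjugate_square_greater_0_vec[OF x] conjugate_square_greater_0_vec[OF y]
      conjugate_square_ge_0_vec[of x] conjugate_square_ge_0_vec[of y] by auto
  ultimately have "Im l = 0" by simp
  hence "A *\<^sub>v x = Re l \<cdot>\<^sub>v x" and "A *\<^sub>v y = Re l \<cdot>\<^sub>v y"
    using Ax Ay x y by auto
  with x y \<open>x \<noteq> 0\<^sub>v n \<or> y \<noteq> 0\<^sub>v n\<close> show ?thesis using that by blast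
qed

(* Not the library's orthogonal_mat, which only asks for pairwise orthogonal columns. *)
definition orthonormal_mat :: "nat \<Rightarrow> real mat \<Rightarrow> bool" where
  "orthonormal_mat n P \<longleftrightarrow>
     P \<in> carrier_mat n n \<and> transpose_mat P * P = 1\<^sub>m n \<and> P * transpose_mat P = 1\<^sub>m n"

definition spectral_decomposition :: "nat \<Rightarrow> real mat \<Rightarrow> real mat \<Rightarrow> real list \<Rightarrow> bool" where
  "spectral_decomposition n A P es \<longleftrightarrow>
     orthonormal_mat n P \<and> length es = n \<and> A = P * mat_diag n ((!) es) * transpose_mat P"

(* For w = 0 the factor 2 / (w \<bullet> w) is 0, so this is the identity. *)
definition reflection_mat :: "nat \<Rightarrow> real vec \<Rightarrow> real mat" where
  "reflection_mat n w = mat n n (\<lambda>(i,j). (if i = j then 1 else 0) - 2 / (w \<bullet> w) * w $ i * w $ j)"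

lemma reflection_mat_carrier: "reflection_mat n w \<in> carrier_mat n n"
  unfolding reflection_mat_def by simp

lemma reflection_mat_symmetric: "transpose_mat (reflection_mat n w) = reflection_mat n w"
  unfolding reflection_mat_def by (rule eq_matI) auto

lemma reflection_mat_involution:
  assumes w: "w \<in> carrier_vec n"
  shows "reflection_mat n w * reflection_mat n w = 1\<^sub>m n"
proof (rule eq_matI)
  define c where "c = 2 / (w \<bullet> w)"
  have cs: "c * (c * (w \<bullet> w)) = 2 * c" unfolding c_def by (cases "w \<bullet> w = 0") auto
  fix i j assume "i < dim_row (1\<^sub>m n)" "j < dim_col (1\<^sub>m n)"
  hence i: "i < n" and j: "j < n" by auto
  have "(reflection_mat n w * reflection_mat n w) $$ (i,j)
      = (\<Sum>k<n. ((if i = k then 1 else 0) - c * w $ i * w $ k) *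
          ((if k = j then 1 else 0) - c * w $ k * w $ j))"
    using i j unfolding reflection_mat_def c_def by (auto simp: scalar_prod_def atLeast0LessThan)
  also have "\<dots> = (\<Sum>k<n. (if k = i then (if i = j then 1 else 0) else 0)
       - (if k = i then c * w $ k * w $ j else 0)
       - (if k = j then c * w $ i * w $ k else 0)
       + c * c * w $ i * w $ j * (w $ k * w $ k))"
    by (rule sum.cong) (auto simp: algebra_simps)
  also have "\<dots> = (if i = j then 1 else 0) - 2 * c * w $ i * w $ j
      + c * (c * (w \<bullet> w)) * w $ i * w $ j"
    using i j w by (simp add: sum.distrib sum_subtractf sum_distrib_left[symmetric]
        scalar_prod_def atLeast0LessThan)
  also have "\<dots> = 1\<^sub>m n $$ (i,j)" using i j cs by simp
  finally show "(reflection_mat n w * reflection_mat n w) $$ (i,j) = 1\<^sub>m n $$ (i,j)" .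
qed (auto simp: reflection_mat_def)

lemma reflection_mat_maps_unit_vec:
  fixes v :: "real vec"
  assumes v: "v \<in> carrier_vec n" and "n > 0" and unit: "v \<bullet> v = 1"
  shows "reflection_mat n (v - unit_vec n 0) *\<^sub>v unit_vec n 0 = v"
proof -
  define w where "w = v - unit_vec n 0"
  have w: "w \<in> carrier_vec n" using v unfolding w_def by simp
  have vi: "v $ i = w $ i + (if i = 0 then 1 else 0)" if "i < n" for i
    using that v unfolding w_def by auto
  have "reflection_mat n w $$ (i,0) = v $ i" if i: "i < n" for i
  proof (cases "w = 0\<^sub>v n")
    case True
    then show ?thesis using i \<open>n > 0\<close> vi[OF i] unfolding reflection_mat_def by auto
  next
    case False
    have "w \<bullet> w = v \<bullet> v - 2 * v $ 0 + 1"
      unfolding w_def using v \<open>n > 0\<close>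
      by (simp add: minus_scalar_prod_distrib[of _ n] scalar_prod_minus_distrib[of _ n]
          comm_scalar_prod[of "unit_vec n 0" n v])
    hence "w \<bullet> w = - 2 * w $ 0" using vi[OF \<open>n > 0\<close>] unit by simp
    moreover have "w \<bullet> w \<noteq> 0" using conjugate_square_greater_0_vec[OF w] False by simp
    ultimately show ?thesis
      using i \<open>n > 0\<close> vi[OF i] unfolding reflection_mat_def
      by (cases "i = 0") (simp_all add: field_simps)
  qed
  then show ?thesis
    using v \<open>n > 0\<close> unfolding w_def[symmetric] by (intro eq_vecI) (auto simp: reflection_mat_def)
qed

lemma orthonormal_mat_mult:
  assumes "orthonormal_mat n H" and "orthonormal_mat n P"
  shows "orthonormal_mat n (H * P)"
proof -
  have H: "H \<in> carrier_mat n n" and P: "P \<in> carrier_mat n n"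
    using assms unfolding orthonormal_mat_def by auto
  have HT: "transpose_mat H \<in> carrier_mat n n" and PT: "transpose_mat P \<in> carrier_mat n n"
    using H P by auto
  have "transpose_mat (H * P) * (H * P) = transpose_mat P * (transpose_mat H * H) * P"
    using H P HT PT by (simp add: transpose_mult[OF H P] assoc_mult_mat[of _ n n _ n _ n])
  moreover have "H * P * transpose_mat (H * P) = H * (P * transpose_mat P) * transpose_mat H"
    using H P HT PT by (simp add: transpose_mult[OF H P] assoc_mult_mat[of _ n n _ n _ n])
  ultimately show ?thesis using assms H P unfolding orthonormal_mat_def by auto
qed

lemma spectral_decomposition_conj:
  assumes H: "orthonormal_mat n H" and A: "spectral_decomposition n A P es"
  shows "spectral_decomposition n (H * A * transpose_mat H) (H * P) es"
proof -
  have "H \<in> carrier_mat n n" "P \<in> carrier_mat n n" "mat_diag n ((!) es) \<in> carrier_mat n n"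
    using assms unfolding spectral_decomposition_def orthonormal_mat_def by auto
  hence "H * (P * mat_diag n ((!) es) * transpose_mat P) * transpose_mat H
      = H * P * mat_diag n ((!) es) * transpose_mat (H * P)"
    by (simp add: transpose_mult mult_carrier_mat[of _ n n _ n] assoc_mult_mat[of _ n n _ n _ n])
  then show ?thesis
    using assms orthonormal_mat_mult[OF H] unfolding spectral_decomposition_def by auto
qed

lemma spectral_decomposition_block:
  assumes "spectral_decomposition m A P es"
  shows "spectral_decomposition (Suc m)
    (four_block_mat (mat 1 1 (\<lambda>_. e)) (0\<^sub>m 1 m) (0\<^sub>m m 1) A)
    (four_block_mat (1\<^sub>m 1) (0\<^sub>m 1 m) (0\<^sub>m m 1) P) (e # es)"
proof -
  let ?E = "mat 1 1 (\<lambda>_. e) :: real mat"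
  let ?P = "four_block_mat (1\<^sub>m 1) (0\<^sub>m 1 m) (0\<^sub>m m 1) P"
  have P: "P \<in> carrier_mat m m" and PT: "transpose_mat P \<in> carrier_mat m m"
    and D: "mat_diag m ((!) es) \<in> carrier_mat m m"
    and PP: "transpose_mat P * P = 1\<^sub>m m" "P * transpose_mat P = 1\<^sub>m m"
    and len: "length es = m" and A: "A = P * mat_diag m ((!) es) * transpose_mat P"
    using assms unfolding spectral_decomposition_def orthonormal_mat_def by auto
  have one: "four_block_mat (1\<^sub>m 1) (0\<^sub>m 1 m) (0\<^sub>m m 1) (1\<^sub>m m) = (1\<^sub>m (Suc m) :: real mat)"
    by (rule eq_matI) auto
  have diag: "mat_diag (Suc m) ((!) (e # es)) = four_block_mat ?E (0\<^sub>m 1 m) (0\<^sub>m m 1) (mat_diag m ((!) es))"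
    by (rule eq_matI) (auto simp: mat_diag_def nth_Cons')
  have T: "transpose_mat (four_block_mat (1\<^sub>m 1) (0\<^sub>m 1 m) (0\<^sub>m m 1) P)
      = four_block_mat (1\<^sub>m 1) (0\<^sub>m 1 m) (0\<^sub>m m 1) (transpose_mat P)"
    using P by (subst transpose_four_block_mat[of _ 1 1 _ m _ m]) auto
  have "transpose_mat ?P * ?P = 1\<^sub>m (Suc m)" "?P * transpose_mat ?P = 1\<^sub>m (Suc m)"
    unfolding T using P PT PP by (simp_all add: mult_four_block_mat[of _ 1 1 _ m _ m _ _ 1 _ m] one)
  moreover have "?P * mat_diag (Suc m) ((!) (e # es))
      = four_block_mat ?E (0\<^sub>m 1 m) (0\<^sub>m m 1) (P * mat_diag m ((!) es))"
    unfolding diag using P D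
    by (simp add: mult_four_block_mat[of _ 1 1 _ m _ m _ _ 1 _ m] left_mult_zero_mat[OF D])
  hence "?P * mat_diag (Suc m) ((!) (e # es)) * transpose_mat ?P
      = four_block_mat ?E (0\<^sub>m 1 m) (0\<^sub>m m 1) A"
    unfolding T A using P PT D
    by (simp add: mult_four_block_mat[of _ 1 1 _ m _ m _ _ 1 _ m] right_mult_zero_mat[of _ m m]
        left_add_zero_mat[of _ m m] mult_carrier_mat[of _ m m _ m])
  ultimately show ?thesis
    using P len unfolding spectral_decomposition_def orthonormal_mat_def by auto
qed

lemma symmetric_deflation:
  fixes A :: "real mat"
  assumes A: "A \<in> carrier_mat (Suc m) (Suc m)" and sym: "transpose_mat A = A"
  obtains H e B where "orthonormal_mat (Suc m) H" "B \<in> carrier_mat m m" "transpose_mat B = B"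
    "A = H * four_block_mat (mat 1 1 (\<lambda>_. e)) (0\<^sub>m 1 m) (0\<^sub>m m 1) B * transpose_mat H"
proof -
  let ?n = "Suc m"
  let ?e0 = "unit_vec ?n 0 :: real vec"
  obtain e u where u: "u \<in> carrier_vec ?n" "u \<noteq> 0\<^sub>v ?n" "A *\<^sub>v u = e \<cdot>\<^sub>v u"
    using real_symmetric_has_eigenvector[OF A sym] by blast
  have "u \<bullet> u > 0" using conjugate_square_greater_0_vec[OF u(1)] u(2) by simp
  define v where "v = (1 / sqrt (u \<bullet> u)) \<cdot>\<^sub>v u"
  have v: "v \<in> carrier_vec ?n" using u unfolding v_def by auto
  have vv: "v \<bullet> v = 1" unfolding v_def using u(1) \<open>u \<bullet> u > 0\<close>
    by (simp add: smult_scalar_prod_distrib[of _ ?n] scalar_prod_smult_distrib[of _ ?n])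
  have Av: "A *\<^sub>v v = e \<cdot>\<^sub>v v"
    unfolding v_def using u by (simp add: mult_mat_vec[OF A u(1)] smult_smult_assoc mult.commute)
  define H where "H = reflection_mat ?n (v - ?e0)"
  have H: "H \<in> carrier_mat ?n ?n" "transpose_mat H = H" "H * H = 1\<^sub>m ?n" "H *\<^sub>v ?e0 = v"
    unfolding H_def using v vv
    by (simp_all add: reflection_mat_carrier reflection_mat_symmetric reflection_mat_involution
        reflection_mat_maps_unit_vec)
  define A' where "A' = H * A * H"
  have A': "A' \<in> carrier_mat ?n ?n" unfolding A'_def using H A by auto
  have A'sym: "transpose_mat A' = A'"
    unfolding A'_def using H A sym
    by (simp add: transpose_mult[of _ ?n ?n _ ?n] mult_carrier_mat[of _ ?n ?n _ ?n])
  have "A' *\<^sub>v ?e0 = H *\<^sub>v (A *\<^sub>v v)"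
    unfolding A'_def using H A by (simp add: assoc_mult_mat_vec[of _ ?n ?n _ ?n])
  also have "\<dots> = e \<cdot>\<^sub>v (H *\<^sub>v (H *\<^sub>v ?e0))"
    using H Av by (simp add: mult_mat_vec[OF H(1) v])
  also have "\<dots> = e \<cdot>\<^sub>v ?e0"
    using H(3) assoc_mult_mat_vec[OF H(1) H(1) unit_vec_carrier, of 0] by simp
  finally have col0: "A' *\<^sub>v ?e0 = e \<cdot>\<^sub>v ?e0" .
  have A'swap: "A' $$ (j,i) = A' $$ (i,j)" if "i < ?n" "j < ?n" for i j
    using A' that A'sym[THEN arg_cong, of "\<lambda>X. X $$ (i,j)"] by simp
  have A'0: "A' $$ (i,0) = (if i = 0 then e else 0)" "A' $$ (0,i) = (if i = 0 then e else 0)"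
    if "i < ?n" for i
    using arg_cong[OF col0, of "\<lambda>x. x $ i"] A' that A'swap[OF that, of 0] by auto
  define B where "B = mat m m (\<lambda>(i,j). A' $$ (Suc i, Suc j))"
  have B: "B \<in> carrier_mat m m" unfolding B_def by simp
  have "transpose_mat B = B"
    unfolding B_def using A'swap by (intro eq_matI) auto
  have "A' = four_block_mat (mat 1 1 (\<lambda>_. e)) (0\<^sub>m 1 m) (0\<^sub>m m 1) B"
    using A' A'0 by (intro eq_matI) (auto simp: B_def)
  moreover have "H * A' * transpose_mat H = (H * H) * A * (H * H)"
    unfolding A'_def using H(1,2) A
    by (simp add: mult_carrier_mat[of _ ?n ?n _ ?n] assoc_mult_mat[of _ ?n ?n _ ?n _ ?n])
  hence "A = H * A' * transpose_mat H" using H A by simp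
  moreover have "orthonormal_mat ?n H" using H unfolding orthonormal_mat_def by simp
  ultimately show ?thesis using that B \<open>transpose_mat B = B\<close> by blast
qed

theorem real_symmetric_spectral_decomposition:
  fixes A :: "real mat"
  assumes "A \<in> carrier_mat n n" and "transpose_mat A = A"
  obtains P es where "spectral_decomposition n A P es"
  using assms
proof (induction n arbitrary: A thesis)
  case 0
  have "spectral_decomposition 0 A (1\<^sub>m 0) []"
    using "0.prems" by (auto intro!: eq_matI simp: spectral_decomposition_def orthonormal_mat_def)
  then show ?case using "0.prems" by blast
next
  case (Suc m)
  obtain H e B where H: "orthonormal_mat (Suc m) H" and B: "B \<in> carrier_mat m m" "transpose_mat B = B"
    and A: "A = H * four_block_mat (mat 1 1 (\<lambda>_. e)) (0\<^sub>m 1 m) (0\<^sub>m m 1) B * transpose_mat H"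
    using symmetric_deflation[OF Suc.prems(2,3)] by blast
  obtain P es where "spectral_decomposition m B P es" using Suc.IH[OF _ B] by blast
  from spectral_decomposition_conj[OF H spectral_decomposition_block[OF this, of e]]
  show ?case using Suc.prems(1) unfolding A by blast
qed

lemma proots_prod_linear_factors: "proots (\<Prod>a\<leftarrow>es. [:- a, 1:]) = mset (es :: real list)"
proof (induction es)
  case (Cons a es)
  have "(\<Prod>a\<leftarrow>es. [:- a, 1:]) \<noteq> (0 :: real poly)" by (auto simp: prod_list_zero_iff)
  then have "proots (\<Prod>a\<leftarrow>a # es. [:- a, 1:]) = proots [:- a, 1:] + proots (\<Prod>a\<leftarrow>es. [:- a, 1:])"
    unfolding list.map prod_list.Cons by (intro proots_mult) simp_all
  then show ?case using Cons proots_linear_factor[of "- a"] by simp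
qed simp

lemma eigs_desc_spectral_decomposition:
  assumes "A \<in> carrier_mat n n" and "spectral_decomposition n A P es"
  shows "eigs_desc A = rev (sort es)"
proof -
  have D: "mat_diag n ((!) es) \<in> carrier_mat n n" by simp
  have "similar_mat_wit A (mat_diag n ((!) es)) P (transpose_mat P)"
    using assms unfolding similar_mat_wit_def spectral_decomposition_def orthonormal_mat_def
    by auto
  hence "char_poly A = char_poly (mat_diag n ((!) es))"
    by (intro char_poly_similar) (auto simp: similar_mat_def)
  also have "\<dots> = (\<Prod>a\<leftarrow>diag_mat (mat_diag n ((!) es)). [:- a, 1:])"
    by (rule char_poly_upper_triangular[OF D]) (auto simp: upper_triangular_def mat_diag_def)
  also have "diag_mat (mat_diag n ((!) es)) = es"
    using assms(2) unfolding spectral_decomposition_def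
    by (intro nth_equalityI) (auto simp: diag_mat_def mat_diag_def)
  finally show ?thesis
    unfolding eigs_desc_def by (simp add: proots_prod_linear_factors sorted_list_of_multiset_mset)
qed

lemma lambda_k_spectral_decomposition:
  assumes "A \<in> carrier_mat n n" and "spectral_decomposition n A P es" and "1 \<le> k" "k \<le> n"
  shows "lambda_k k A = sort es ! (n - k)"
  using assms eigs_desc_spectral_decomposition[OF assms(1,2)]
  by (auto simp: lambda_k_def spectral_decomposition_def rev_nth)

lemma sorted_nth_1_le_iff:
  fixes s :: "'a::linorder list"
  assumes "sorted s" and "2 \<le> length s"
  shows "s ! 1 \<le> t \<longleftrightarrow> (\<exists>i<length s. \<exists>j<length s. i \<noteq> j \<and> s ! i \<le> t \<and> s ! j \<le> t)"
proof
  assume "s ! 1 \<le> t"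
  moreover have "s ! 0 \<le> s ! 1" using assms by (simp add: sorted_nth_mono)
  moreover have "0 < length s" "1 < length s" using assms(2) by auto
  ultimately show "\<exists>i<length s. \<exists>j<length s. i \<noteq> j \<and> s ! i \<le> t \<and> s ! j \<le> t"
    by (metis order.trans zero_neq_one)
next
  assume "\<exists>i<length s. \<exists>j<length s. i \<noteq> j \<and> s ! i \<le> t \<and> s ! j \<le> t"
  then obtain i where "1 \<le> i" "i < length s" "s ! i \<le> t" by (metis less_one not_le)
  then show "s ! 1 \<le> t" using assms(1) sorted_nth_mono[of s 1 i] by simp
qed

lemma two_indices_le_iff_length_filter:
  "(\<exists>i<length xs. \<exists>j<length xs. i \<noteq> j \<and> xs ! i \<le> t \<and> xs ! j \<le> t)
     \<longleftrightarrow> 1 < length (filter (\<lambda>x. x \<le> t) xs)"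
proof -
  let ?S = "{i. i < length xs \<and> xs ! i \<le> t}"
  have "1 < card ?S \<longleftrightarrow> \<not> (\<forall>i\<in>?S. \<forall>j\<in>?S. i = j)"
    using card_le_Suc0_iff_eq[of ?S] by fastforce
  then show ?thesis unfolding length_filter_conv_card by blast
qed

lemma sort_nth_1_le_iff:
  fixes xs :: "'a::linorder list"
  assumes "2 \<le> length xs"
  shows "sort xs ! 1 \<le> t \<longleftrightarrow> (\<exists>i<length xs. \<exists>j<length xs. i \<noteq> j \<and> xs ! i \<le> t \<and> xs ! j \<le> t)"
proof -
  have "length (filter (\<lambda>x. x \<le> t) (sort xs)) = length (filter (\<lambda>x. x \<le> t) xs)"
    by (metis mset_filter mset_sort size_mset)
  moreover have "sort xs ! 1 \<le> t \<longleftrightarrow> 1 < length (filter (\<lambda>x. x \<le> t) (sort xs))"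
    using sorted_nth_1_le_iff[of "sort xs" t] two_indices_le_iff_length_filter[of "sort xs" t] assms
    by simp
  ultimately show ?thesis using two_indices_le_iff_length_filter[of xs t] by simp
qed

lemma quadratic_form_spectral_decomposition:
  assumes SD: "spectral_decomposition n A P es" and x: "x \<in> carrier_vec n"
  defines "y \<equiv> transpose_mat P *\<^sub>v x"
  shows "x \<bullet> (A *\<^sub>v x) = (\<Sum>l<n. es ! l * (y $ l)\<^sup>2)"
    and "x \<bullet> x = (\<Sum>l<n. (y $ l)\<^sup>2)"
proof -
  have P: "P \<in> carrier_mat n n" and PP: "P * transpose_mat P = 1\<^sub>m n"
    and A: "A = P * mat_diag n ((!) es) * transpose_mat P"
    using SD unfolding spectral_decomposition_def orthonormal_mat_def by auto
  have y: "y \<in> carrier_vec n" unfolding y_def using P x by simp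
  have Dy: "mat_diag n ((!) es) *\<^sub>v y = vec n (\<lambda>l. es ! l * y $ l)"
    using y by (intro eq_vecI)
      (auto simp: mat_diag_def scalar_prod_def sum.delta' if_distrib if_distribR cong: if_cong)
  have "A *\<^sub>v x = P *\<^sub>v (mat_diag n ((!) es) *\<^sub>v y)"
    unfolding A y_def using P x by (simp add: assoc_mult_mat_vec[of _ n n _ n])
  hence "x \<bullet> (A *\<^sub>v x) = y \<bullet> (mat_diag n ((!) es) *\<^sub>v y)"
    using transpose_vec_mult_scalar[OF P _ x, of "mat_diag n ((!) es) *\<^sub>v y"] Dy
    unfolding y_def by simp
  also have "\<dots> = (\<Sum>l<n. es ! l * (y $ l)\<^sup>2)"
    unfolding Dy using y by (simp add: scalar_prod_def power2_eq_square atLeast0LessThan algebra_simps)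
  finally show "x \<bullet> (A *\<^sub>v x) = (\<Sum>l<n. es ! l * (y $ l)\<^sup>2)" .
  have "x = P *\<^sub>v y"
    unfolding y_def using assoc_mult_mat_vec[OF P _ x, of "transpose_mat P"] P PP x by simp
  hence "x \<bullet> x = y \<bullet> y" using transpose_vec_mult_scalar[OF P y x] unfolding y_def by simp
  then show "x \<bullet> x = (\<Sum>l<n. (y $ l)\<^sup>2)"
    using y by (simp add: scalar_prod_def power2_eq_square atLeast0LessThan)
qed

lemma quadratic_form_le_if_eigenvalues_le:
  assumes SD: "spectral_decomposition n A P es" and x: "x \<in> carrier_vec n"
    and small: "\<And>l. l < n \<Longrightarrow> (transpose_mat P *\<^sub>v x) $ l \<noteq> 0 \<Longrightarrow> es ! l \<le> t"
  shows "x \<bullet> (A *\<^sub>v x) \<le> t * (x \<bullet> x)"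
proof -
  let ?y = "transpose_mat P *\<^sub>v x"
  have "(\<Sum>l<n. es ! l * (?y $ l)\<^sup>2) \<le> (\<Sum>l<n. t * (?y $ l)\<^sup>2)"
  proof (rule sum_mono)
    fix l assume "l \<in> {..<n}"
    then show "es ! l * (?y $ l)\<^sup>2 \<le> t * (?y $ l)\<^sup>2"
      using small[of l] by (cases "?y $ l = 0") (auto intro: mult_right_mono)
  qed
  then show ?thesis
    using quadratic_form_spectral_decomposition[OF SD x] by (simp add: sum_distrib_left)
qed

lemma quadratic_form_gt_if_eigenvalues_gt:
  assumes SD: "spectral_decomposition n A P es" and x: "x \<in> carrier_vec n" "x \<noteq> 0\<^sub>v n"
    and large: "\<And>l. l < n \<Longrightarrow> (transpose_mat P *\<^sub>v x) $ l \<noteq> 0 \<Longrightarrow> t < es ! l"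
  shows "t * (x \<bullet> x) < x \<bullet> (A *\<^sub>v x)"
proof -
  let ?y = "transpose_mat P *\<^sub>v x"
  have "x \<bullet> x \<noteq> 0" using conjugate_square_greater_0_vec[OF x(1)] x(2) by simp
  then obtain l0 where l0: "l0 < n" "?y $ l0 \<noteq> 0"
    using quadratic_form_spectral_decomposition(2)[OF SD x(1)]
      sum.not_neutral_contains_not_neutral[of "\<lambda>l. (?y $ l)\<^sup>2" "{..<n}"] by auto
  have "0 < (\<Sum>l<n. (es ! l - t) * (?y $ l)\<^sup>2)"
  proof (rule sum_pos2[of _ l0])
    show "0 < (es ! l0 - t) * (?y $ l0)\<^sup>2" using large[OF l0] l0 by simp
    show "0 \<le> (es ! l - t) * (?y $ l)\<^sup>2" if "l \<in> {..<n}" for l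
      using large[of l] that by (cases "?y $ l = 0") auto
  qed (use l0 in auto)
  then show ?thesis
    using quadratic_form_spectral_decomposition[OF SD x(1)]
    by (simp add: algebra_simps sum_subtractf sum_distrib_left)
qed

lemma exists_vec_on_two_coordinates_with_zero_entry:
  fixes C :: "real mat"
  assumes C: "C \<in> carrier_mat n n" and "i < n" "j < n" "i \<noteq> j" "k < n"
  obtains y where "y \<in> carrier_vec n" "y \<noteq> 0\<^sub>v n"
    "\<And>l. l < n \<Longrightarrow> y $ l \<noteq> 0 \<Longrightarrow> l = i \<or> l = j" "(C *\<^sub>v y) $ k = 0"
proof -
  obtain a b where ab: "a \<noteq> 0 \<or> b \<noteq> 0" "a * C $$ (k,i) + b * C $$ (k,j) = 0"
  proof (cases "C $$ (k,i) = 0")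
    case True
    then show ?thesis using that[of 1 0] by simp
  next
    case False
    then show ?thesis using that[of "C $$ (k,j)" "- C $$ (k,i)"] by simp
  qed
  define y where "y = a \<cdot>\<^sub>v unit_vec n i + b \<cdot>\<^sub>v unit_vec n j"
  have y: "y \<in> carrier_vec n" unfolding y_def by simp
  have yl: "y $ l = (if l = i then a else 0) + (if l = j then b else 0)" if "l < n" for l
    using that assms(2,3) unfolding y_def by simp
  have "C *\<^sub>v y = a \<cdot>\<^sub>v (C *\<^sub>v unit_vec n i) + b \<cdot>\<^sub>v (C *\<^sub>v unit_vec n j)"
    unfolding y_def using C
    by (simp add: mult_add_distrib_mat_vec[of _ n n] mult_mat_vec[of _ n n])
  hence "(C *\<^sub>v y) $ k = 0" using ab(2) C \<open>k < n\<close> \<open>i < n\<close> \<open>j < n\<close> by simp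
  moreover have "y \<noteq> 0\<^sub>v n"
    using ab(1) yl[OF \<open>i < n\<close>] yl[OF \<open>j < n\<close>] \<open>i \<noteq> j\<close> \<open>i < n\<close> \<open>j < n\<close>
    by (auto simp: vec_eq_iff)
  moreover have "l = i \<or> l = j" if "l < n" "y $ l \<noteq> 0" for l
    using yl[OF that(1)] that(2) by (auto split: if_splits)
  ultimately show ?thesis using that[OF y] by blast
qed

lemma unique_index_le_if_sort_nth_1_gt:
  fixes xs :: "'a::linorder list"
  assumes "2 \<le> length xs" and "\<not> sort xs ! 1 \<le> t"
  obtains k where "k < length xs" "\<And>l. l < length xs \<Longrightarrow> xs ! l \<le> t \<Longrightarrow> l = k"
proof (cases "\<exists>k<length xs. xs ! k \<le> t")
  case True
  then show ?thesis using that sort_nth_1_le_iff[OF assms(1)] assms(2) by blast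
next
  case False
  moreover have "0 < length xs" using assms(1) by linarith
  ultimately show ?thesis using that[of 0] by blast
qed

lemma second_smallest_eigenvalue_mono:
  assumes SA: "spectral_decomposition n A P es" and SB: "spectral_decomposition n B Q fs"
    and "2 \<le> n" and le: "\<And>x. x \<in> carrier_vec n \<Longrightarrow> x \<bullet> (A *\<^sub>v x) \<le> x \<bullet> (B *\<^sub>v x)"
  shows "sort es ! 1 \<le> sort fs ! 1"
proof (rule ccontr)
  define t where "t = sort fs ! 1"
  have len: "length es = n" "length fs = n" and P: "P \<in> carrier_mat n n"
    and Q: "Q \<in> carrier_mat n n" "transpose_mat Q * Q = 1\<^sub>m n"
    using SA SB unfolding spectral_decomposition_def orthonormal_mat_def by auto
  obtain i j where ij: "i < n" "j < n" "i \<noteq> j" "fs ! i \<le> t" "fs ! j \<le> t"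
    using sort_nth_1_le_iff[of fs t] len \<open>2 \<le> n\<close> unfolding t_def by auto
  assume "\<not> sort es ! 1 \<le> sort fs ! 1"
  then obtain k where "k < n" and k: "\<And>l. l < n \<Longrightarrow> es ! l \<le> t \<Longrightarrow> l = k"
    using unique_index_le_if_sort_nth_1_gt[of es t] len \<open>2 \<le> n\<close> unfolding t_def by metis
  \<comment> \<open>A nonzero x in the span of the eigenvectors of B for fs ! i and fs ! j that is orthogonal
    to the k-th eigenvector of A gives x^T B x \<le> t |x|^2 < x^T A x.\<close>
  obtain y where y: "y \<in> carrier_vec n" "y \<noteq> 0\<^sub>v n"
    and supp: "\<And>l. l < n \<Longrightarrow> y $ l \<noteq> 0 \<Longrightarrow> l = i \<or> l = j"
    and "((transpose_mat P * Q) *\<^sub>v y) $ k = 0"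
    using exists_vec_on_two_coordinates_with_zero_entry[of "transpose_mat P * Q" n i j k]
      P Q ij \<open>k < n\<close> by auto
  define x where "x = Q *\<^sub>v y"
  have x: "x \<in> carrier_vec n" unfolding x_def using Q y by simp
  have QTx: "transpose_mat Q *\<^sub>v x = y"
    unfolding x_def using Q y by (simp add: assoc_mult_mat_vec[of _ n n _ n, symmetric])
  have PTx: "(transpose_mat P *\<^sub>v x) $ k = 0"
    unfolding x_def using P Q y \<open>((transpose_mat P * Q) *\<^sub>v y) $ k = 0\<close>
    by (simp add: assoc_mult_mat_vec[of _ n n _ n])
  have "x \<noteq> 0\<^sub>v n" using QTx y Q by auto
  have "x \<bullet> (B *\<^sub>v x) \<le> t * (x \<bullet> x)"
    using quadratic_form_le_if_eigenvalues_le[OF SB x] supp ij unfolding QTx by blast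
  moreover have "t < es ! l" if "l < n" "(transpose_mat P *\<^sub>v x) $ l \<noteq> 0" for l
    using k[OF that(1)] PTx that(2) by force
  then have "t * (x \<bullet> x) < x \<bullet> (A *\<^sub>v x)"
    using quadratic_form_gt_if_eigenvalues_gt[OF SA x \<open>x \<noteq> 0\<^sub>v n\<close>] by blast
  ultimately show False using le[OF x] by simp
qed

lemma lambda_second_smallest_mono:
  fixes A B :: "real mat"
  assumes A: "A \<in> carrier_mat n n" "transpose_mat A = A"
    and B: "B \<in> carrier_mat n n" "transpose_mat B = B" and "2 \<le> n"
    and "\<And>x. x \<in> carrier_vec n \<Longrightarrow> x \<bullet> (A *\<^sub>v x) \<le> x \<bullet> (B *\<^sub>v x)"
  shows "lambda_k (n - 1) A \<le> lambda_k (n - 1) B"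
proof -
  obtain P es where SA: "spectral_decomposition n A P es"
    using real_symmetric_spectral_decomposition[OF A] .
  obtain Q fs where SB: "spectral_decomposition n B Q fs"
    using real_symmetric_spectral_decomposition[OF B] .
  have "n - (n - 1) = 1" using \<open>2 \<le> n\<close> by simp
  then show ?thesis
    using lambda_k_spectral_decomposition[OF A(1) SA, of "n - 1"]
      lambda_k_spectral_decomposition[OF B(1) SB, of "n - 1"] \<open>2 \<le> n\<close>
      second_smallest_eigenvalue_mono[OF SA SB] assms(6)
    by simp
qed

lemma zero_diag_carrier: "M \<in> carrier_mat n n \<Longrightarrow> zero_diag M \<in> carrier_mat n n"
  unfolding zero_diag_def by auto

lemma zero_diag_in_S_set:
  assumes "M \<in> S_set n"
  shows "zero_diag M \<in> S_set n"
proof -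
  have M: "M \<in> carrier_mat n n" and sym: "transpose_mat M = M"
    and entries: "\<forall>i<n. \<forall>j<n. 0 \<le> M $$ (i,j) \<and> M $$ (i,j) \<le> 1"
    using assms unfolding S_set_def by auto
  have "M $$ (j,i) = M $$ (i,j)" if "i < n" "j < n" for i j
    using M that sym[THEN arg_cong, of "\<lambda>X. X $$ (i,j)"] by simp
  then have "transpose_mat (zero_diag M) = zero_diag M"
    using M by (intro eq_matI) (auto simp: zero_diag_def)
  then show ?thesis
    using M entries zero_diag_carrier[OF M] unfolding S_set_def by (auto simp: zero_diag_def)
qed

lemma quadratic_form_zero_diag:
  assumes M: "M \<in> carrier_mat n n" and x: "x \<in> carrier_vec n"
  shows "x \<bullet> (M *\<^sub>v x) = x \<bullet> (zero_diag M *\<^sub>v x) + (\<Sum>i<n. M $$ (i,i) * (x $ i)\<^sup>2)"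
proof -
  have "x \<bullet> (M *\<^sub>v x) = (\<Sum>i<n. \<Sum>j<n. x $ i * M $$ (i,j) * x $ j)"
    using M x by (simp add: scalar_prod_def sum_distrib_left atLeast0LessThan algebra_simps)
  also have "\<dots> = (\<Sum>i<n. \<Sum>j<n. x $ i * zero_diag M $$ (i,j) * x $ j
      + (if j = i then M $$ (i,i) * (x $ i)\<^sup>2 else 0))"
    using M by (intro sum.cong refl) (auto simp: zero_diag_def power2_eq_square)
  also have "\<dots> = x \<bullet> (zero_diag M *\<^sub>v x) + (\<Sum>i<n. M $$ (i,i) * (x $ i)\<^sup>2)"
    using zero_diag_carrier[OF M] x
    by (simp add: sum.distrib scalar_prod_def sum_distrib_left atLeast0LessThan algebra_simps)
  finally show ?thesis .
qed

theorem lemma4p10: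
  fixes n :: nat and M :: "real mat"
  assumes "n \<ge> 2"
    and "is_minimiser n M"
  shows "is_minimiser n (zero_diag M)"
proof -
  have MS: "M \<in> S_set n" and min: "\<forall>M'\<in>S_set n. lambda_k (n - 1) M \<le> lambda_k (n - 1) M'"
    using assms(2) unfolding is_minimiser_def by auto
  have M: "M \<in> carrier_mat n n" "transpose_mat M = M" and diag: "\<forall>i<n. 0 \<le> M $$ (i,i)"
    using MS unfolding S_set_def by auto
  have ZS: "zero_diag M \<in> S_set n" using zero_diag_in_S_set[OF MS] .
  have "x \<bullet> (zero_diag M *\<^sub>v x) \<le> x \<bullet> (M *\<^sub>v x)" if "x \<in> carrier_vec n" for x
  proof -
    have "0 \<le> (\<Sum>i<n. M $$ (i,i) * (x $ i)\<^sup>2)" using diag by (intro sum_nonneg) auto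
    then show ?thesis using quadratic_form_zero_diag[OF M(1) that] by linarith
  qed
  then have "lambda_k (n - 1) (zero_diag M) \<le> lambda_k (n - 1) M"
    using lambda_second_smallest_mono[of "zero_diag M" n M] ZS M assms(1)
    unfolding S_set_def by blast
  with ZS min show ?thesis unfolding is_minimiser_def by force
qed

end
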